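(* For every odd integer $n\geq 3$ and every integer $m\geq 2$, the graph $mW_n$ (the disjoint union of $m$ copies of the wheel $W_n$) is $C_3$-supermagic.
   Context: All graphs are finite and simple. For a graph $H$, a graph $G=(V,E)$ has an $H$-covering if every edge of $G$ belongs to a subgraph of $G$ isomorphic to $H$. For such $G$, an $H$-magic labeling is a bijection $\lambda: V\cup E\to\{1,2,\dots,|V|+|E|\}$ for which there is a constant $c$ such that for every subgraph $H'=(V',E')$ of $G$ isomorphic to $H$, $\sum_{v\in V'}\lambda(v)+\sum_{e\in E'}\lambda(e)=c$. It is $H$-supermagic if moreover $\{\lambda(v):v\in V\}=\{1,\dots,|V|\}$; $G$ is $H$-supermagic if it admits such a labeling. $C_k$ is the cycle of length $k$. $mG$ denotes the disjoint union of $m$ copies of $G$. The wheel $W_n=K_1+C_n$ has vertices $c,v_1,\dots,v_n$ and edges $cv_i$ ($1\le i\le n$) and $v_iv_{i+1}$ ($1\le i\le n$, indices modulo $n$). *)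

theory Defs
  imports Main
begin

definition simple_graph :: "'a set \<Rightarrow> 'a set set \<Rightarrow> bool" where
  "simple_graph V E \<longleftrightarrow> finite V \<and>
     (\<forall>e\<in>E. \<exists>u v. e = {u, v} \<and> u \<noteq> v \<and> u \<in> V \<and> v \<in> V)"

definition subgraph :: "'a set \<Rightarrow> 'a set set \<Rightarrow> 'a set \<Rightarrow> 'a set set \<Rightarrow> bool" where
  "subgraph V' E' V E \<longleftrightarrow> V' \<subseteq> V \<and> E' \<subseteq> E \<and> (\<forall>e\<in>E'. e \<subseteq> V')"

definition isomorphic :: "'b set \<Rightarrow> 'b set set \<Rightarrow> 'a set \<Rightarrow> 'a set set \<Rightarrow> bool" where
  "isomorphic VH EH V' E' \<longleftrightarrow>
     (\<exists>f. bij_betw f VH V' \<and> (\<forall>u\<in>VH. \<forall>v\<in>VH. {u, v} \<in> EH \<longleftrightarrow> {f u, f v} \<in> E'))"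

definition H_copy :: "'b set \<Rightarrow> 'b set set \<Rightarrow> 'a set \<Rightarrow> 'a set set \<Rightarrow> 'a set \<Rightarrow> 'a set set \<Rightarrow> bool" where
  "H_copy VH EH V E V' E' \<longleftrightarrow> subgraph V' E' V E \<and> isomorphic VH EH V' E'"

definition H_covering :: "'b set \<Rightarrow> 'b set set \<Rightarrow> 'a set \<Rightarrow> 'a set set \<Rightarrow> bool" where
  "H_covering VH EH V E \<longleftrightarrow> (\<forall>e\<in>E. \<exists>V' E'. H_copy VH EH V E V' E' \<and> e \<in> E')"

definition H_magic_labeling ::
  "'b set \<Rightarrow> 'b set set \<Rightarrow> 'a set \<Rightarrow> 'a set set \<Rightarrow> ('a + 'a set \<Rightarrow> nat) \<Rightarrow> bool" where
  "H_magic_labeling VH EH V E lam \<longleftrightarrow>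
     bij_betw lam (Inl ` V \<union> Inr ` E) {1 .. card V + card E} \<and>
     (\<exists>c. \<forall>V' E'. H_copy VH EH V E V' E' \<longrightarrow>
           (\<Sum>v\<in>V'. lam (Inl v)) + (\<Sum>e\<in>E'. lam (Inr e)) = c)"

definition H_supermagic_labeling ::
  "'b set \<Rightarrow> 'b set set \<Rightarrow> 'a set \<Rightarrow> 'a set set \<Rightarrow> ('a + 'a set \<Rightarrow> nat) \<Rightarrow> bool" where
  "H_supermagic_labeling VH EH V E lam \<longleftrightarrow>
     H_magic_labeling VH EH V E lam \<and> lam ` (Inl ` V) = {1 .. card V}"

definition H_supermagic :: "'b set \<Rightarrow> 'b set set \<Rightarrow> 'a set \<Rightarrow> 'a set set \<Rightarrow> bool" where
  "H_supermagic VH EH V E \<longleftrightarrow>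
     H_covering VH EH V E \<and> (\<exists>lam. H_supermagic_labeling VH EH V E lam)"

definition cycle_V :: "nat \<Rightarrow> nat set" where
  "cycle_V k = {0..<k}"
definition cycle_E :: "nat \<Rightarrow> nat set set" where
  "cycle_E k = {{i, (i + 1) mod k} | i. i < k}"

text \<open>The wheel W_n: centre None, rim vertices Some i (i < n).\<close>
definition wheel_V :: "nat \<Rightarrow> nat option set" where
  "wheel_V n = insert None (Some ` {0..<n})"
definition wheel_E :: "nat \<Rightarrow> nat option set set" where
  "wheel_E n = {{None, Some i} | i. i < n} \<union> {{Some i, Some ((i + 1) mod n)} | i. i < n}"

text \<open>mG: disjoint union of m copies, copy j has vertices (j, v).\<close>
definition copies_V :: "nat \<Rightarrow> 'a set \<Rightarrow> (nat \<times> 'a) set" where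
  "copies_V m V = {0..<m} \<times> V"
definition copies_E :: "nat \<Rightarrow> 'a set set \<Rightarrow> (nat \<times> 'a) set set" where
  "copies_E m E = {(\<lambda>x. (j, x)) ` e | j e. j < m \<and> e \<in> E}"

end

theory Submission
  imports Defs
begin

text \<open>
  For odd \<open>n \<ge> 5\<close> the only triangles of \<open>W\<^sub>n\<close> are the hub triangles \<open>c v\<^sub>i v\<^sub>i\<^sub>+\<^sub>1\<close>.
  Label the hub by \<open>n\<close>, the rim vertex \<open>v\<^sub>i\<close> by \<open>i\<close>, the spoke \<open>c v\<^sub>i\<close> by \<open>n + 1 + \<rho> i\<close> and
  the rim edge \<open>v\<^sub>i v\<^sub>i\<^sub>+\<^sub>1\<close> by \<open>3n - (i + 1) mod n\<close>, where \<open>\<rho>\<close> is a permutation of \<open>{0..<n}\<close>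
  with \<open>i + \<rho> i + \<rho> (i + 1) = 3(n - 1)/2\<close>; then all hub triangles have the same weight and
  adding 1 gives a \<open>C\<^sub>3\<close>-supermagic labeling of \<open>W\<^sub>n\<close>.

  A \<open>C\<^sub>3\<close>-supermagic labeling \<open>\<lambda>\<close> of any graph lifts to \<open>m\<close> disjoint copies by writing labels in
  base \<open>m\<close>: the \<open>j\<close>-th copy of an element gets high digit \<open>\<lambda> - 1\<close> and low digit \<open>j\<close> on vertices,
  \<open>m - 1 - j\<close> on edges, so the low digits add up to \<open>3(m - 1)\<close> on every triangle.

  \<open>W\<^sub>3 = K\<^sub>4\<close> is not \<open>C\<^sub>3\<close>-supermagic, which is why \<open>m \<ge> 2\<close> is needed for \<open>n = 3\<close>. Writing
  \<open>m = 2z\<close> or \<open>m = 2z + 3\<close>, the copies are grouped into \<open>z\<close> pairs and possibly one triple, and the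
  high digits come from fixed labelings of \<open>2K\<^sub>4\<close> and \<open>3K\<^sub>4\<close> whose triangle weights have constant
  base-2 resp. base-3 digit sums.
\<close>

section \<open>Triangles and \<open>C\<^sub>3\<close>-supermagic labelings\<close>

definition triangle :: "'a set set \<Rightarrow> 'a \<Rightarrow> 'a \<Rightarrow> 'a \<Rightarrow> bool" where
  "triangle E p q r \<longleftrightarrow> p \<noteq> q \<and> q \<noteq> r \<and> p \<noteq> r \<and> {p, q} \<in> E \<and> {q, r} \<in> E \<and> {p, r} \<in> E"

definition clique_elements :: "'a set \<Rightarrow> ('a + 'a set) set" where
  "clique_elements T = Inl ` T \<union> Inr ` {e. e \<subseteq> T \<and> card e = 2}"

lemma triangle_swap:
  assumes "triangle E p q r"
  shows "triangle E q p r" "triangle E p r q"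
  using assms unfolding triangle_def by (auto simp: insert_commute)

lemma edges_within_triple:
  assumes "p \<noteq> q" "q \<noteq> r" "p \<noteq> r"
  shows "{e. e \<subseteq> {p, q, r} \<and> card e = 2} = {{p, q}, {q, r}, {p, r}}"
proof (intro set_eqI iffI)
  fix e assume "e \<in> {e. e \<subseteq> {p, q, r} \<and> card e = 2}"
  then obtain x y where "e = {x, y}" "x \<noteq> y" "x \<in> {p, q, r}" "y \<in> {p, q, r}"
    unfolding card_2_iff by blast
  then show "e \<in> {{p, q}, {q, r}, {p, r}}"
    by (fastforce simp: insert_commute)
next
  fix e assume "e \<in> {{p, q}, {q, r}, {p, r}}"
  then show "e \<in> {e. e \<subseteq> {p, q, r} \<and> card e = 2}"
    using assms by auto
qed

lemma clique_elements_triple: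
  assumes "p \<noteq> q" "q \<noteq> r" "p \<noteq> r"
  shows "clique_elements {p, q, r} = {Inl p, Inl q, Inl r, Inr {p, q}, Inr {q, r}, Inr {p, r}}"
  unfolding clique_elements_def edges_within_triple[OF assms] by blast

lemma sum_clique_elements:
  assumes "finite T"
  shows "sum f (clique_elements T) =
    (\<Sum>v\<in>T. f (Inl v)) + (\<Sum>e\<in>{e. e \<subseteq> T \<and> card e = 2}. f (Inr e))"
proof -
  have "sum f (clique_elements T) = sum f (Inl ` T) + sum f (Inr ` {e. e \<subseteq> T \<and> card e = 2})"
    unfolding clique_elements_def using assms by (intro sum.union_disjoint) auto
  then show ?thesis
    by (simp add: sum.reindex)
qed

lemma sum_clique_elements_triple:
  assumes "p \<noteq> q" "q \<noteq> r" "p \<noteq> r"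
  shows "sum f (clique_elements {p, q, r}) =
    f (Inl p) + f (Inl q) + f (Inl r) + f (Inr {p, q}) + f (Inr {q, r}) + f (Inr {p, r})"
proof -
  have "{p, q} \<noteq> {q, r}" "{p, q} \<noteq> {p, r}" "{q, r} \<noteq> {p, r}"
    using assms by (auto simp: doubleton_eq_iff)
  then show ?thesis
    using assms by (simp add: clique_elements_triple add.assoc)
qed

lemma card_clique_elements_triple:
  assumes "p \<noteq> q" "q \<noteq> r" "p \<noteq> r"
  shows "card (clique_elements {p, q, r}) = 6"
proof -
  have "{p, q} \<noteq> {q, r}" "{p, q} \<noteq> {p, r}" "{q, r} \<noteq> {p, r}"
    using assms by (auto simp: doubleton_eq_iff)
  then show ?thesis
    using assms by (simp add: clique_elements_triple)
qed

lemma cycle_V_3: "cycle_V 3 = {0, 1, 2}"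
  by (auto simp: cycle_V_def)

lemma cycle_E_3: "cycle_E 3 = {{0, 1}, {1, 2}, {0, 2}}"
proof -
  have "{..<3::nat} = {0, 1, 2}" by auto
  have "cycle_E 3 = (\<lambda>i. {i, (i + 1) mod 3}) ` {..<3}"
    unfolding cycle_E_def by auto
  also have "\<dots> = {{0, 1}, {1, 2}, {2, 0}}"
    unfolding \<open>{..<3::nat} = {0, 1, 2}\<close> by (simp add: numeral_2_eq_2)
  also have "\<dots> = {{0, 1}, {1, 2}, {0, 2}}"
    by (simp add: insert_commute)
  finally show ?thesis .
qed

lemma isomorphic_C3_triangle:
  assumes "p \<noteq> q" "q \<noteq> r" "p \<noteq> r"
  shows "isomorphic (cycle_V 3) (cycle_E 3) {p, q, r} {{p, q}, {q, r}, {p, r}}"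
proof -
  define f where "f k = (if k = 0 then p else if k = 1 then q else r)" for k :: nat
  have f: "f 0 = p" "f (Suc 0) = q" "f 2 = r"
    by (simp_all add: f_def)
  have "bij_betw f {0, 1, 2} {p, q, r}"
    unfolding bij_betw_def inj_on_def using assms by (simp add: f)
  moreover have iso: "{u, v} \<in> {{0, 1}, {1, 2}, {0, 2}} \<longleftrightarrow> {f u, f v} \<in> {{p, q}, {q, r}, {p, r}}"
    if "u \<in> {0, 1, 2}" "v \<in> {0, 1, 2}" for u v
    using that assms by (elim insertE emptyE) (simp_all add: f doubleton_eq_iff)
  ultimately show ?thesis
    unfolding isomorphic_def cycle_V_3 cycle_E_3 by (intro exI[of _ f] conjI ballI iso)
qed

lemma simple_graph_edge_subset:
  assumes "simple_graph V E" "e \<in> E"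
  shows "e \<subseteq> V"
  using assms unfolding simple_graph_def by force

lemma triangle_imp_H_copy_C3:
  assumes G: "simple_graph V E" and tri: "triangle E p q r"
  shows "H_copy (cycle_V 3) (cycle_E 3) V E {p, q, r} {{p, q}, {q, r}, {p, r}}"
proof -
  have "{p, q} \<subseteq> V" "{q, r} \<subseteq> V"
    using tri simple_graph_edge_subset[OF G] unfolding triangle_def by blast+
  then have "subgraph {p, q, r} {{p, q}, {q, r}, {p, r}} V E"
    using tri unfolding subgraph_def triangle_def by auto
  moreover have "isomorphic (cycle_V 3) (cycle_E 3) {p, q, r} {{p, q}, {q, r}, {p, r}}"
    using tri unfolding triangle_def by (simp add: isomorphic_C3_triangle)
  ultimately show ?thesis
    unfolding H_copy_def by blast
qed

lemma H_copy_C3_imp_triangle: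
  assumes G: "simple_graph V E" and copy: "H_copy (cycle_V 3) (cycle_E 3) V E V' E'"
  obtains p q r where "triangle E p q r" "V' = {p, q, r}" "E' = {{p, q}, {q, r}, {p, r}}"
proof -
  have "isomorphic {0, 1, 2 :: nat} {{0, 1}, {1, 2}, {0, 2}} V' E'"
    using copy unfolding H_copy_def cycle_V_3 cycle_E_3 by simp
  then obtain f where bij: "bij_betw f {0, 1, 2 :: nat} V'"
    and iso: "\<forall>u\<in>{0, 1, 2}. \<forall>v\<in>{0, 1, 2}. {u, v} \<in> {{0, 1}, {1, 2}, {0, 2}} \<longleftrightarrow> {f u, f v} \<in> E'"
    unfolding isomorphic_def by (elim exE conjE)
  define p q r where "p = f 0" and "q = f 1" and "r = f 2"
  have V': "V' = {p, q, r}"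
    using bij unfolding bij_betw_def p_def q_def r_def by auto
  have inj: "inj_on f {0, 1, 2}"
    using bij by (rule bij_betw_imp_inj_on)
  have distinct: "p \<noteq> q" "q \<noteq> r" "p \<noteq> r"
    unfolding p_def q_def r_def by (simp_all add: inj_on_eq_iff[OF inj])
  have edges: "{p, q} \<in> E'" "{q, r} \<in> E'" "{p, r} \<in> E'"
    using iso unfolding p_def q_def r_def by auto
  have sub: "E' \<subseteq> E" "\<forall>e\<in>E'. e \<subseteq> V'"
    using copy unfolding H_copy_def subgraph_def by auto
  have "E' \<subseteq> {e. e \<subseteq> {p, q, r} \<and> card e = 2}"
    using G sub V' unfolding simple_graph_def by fastforce
  then have "E' = {{p, q}, {q, r}, {p, r}}"
    using edges unfolding edges_within_triple[OF distinct] by blast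
  moreover have "triangle E p q r"
    using distinct edges sub unfolding triangle_def by blast
  ultimately show thesis
    using that V' by blast
qed

lemma simple_graph_finite_edges:
  assumes "simple_graph V E"
  shows "finite E"
proof (rule finite_subset)
  show "E \<subseteq> Pow V"
    using simple_graph_edge_subset[OF assms] by blast
  show "finite (Pow V)"
    using assms unfolding simple_graph_def by simp
qed

lemma inj_on_card_imp_bij_betw:
  assumes "inj_on f A" "f ` A \<subseteq> B" "finite B" "card A = card B"
  shows "bij_betw f A B"
  using assms by (simp add: bij_betw_imageI card_image card_subset_eq)

lemma sum_clique_elements_triangle:
  assumes "triangle E p q r"
  shows "sum f (clique_elements {p, q, r}) =
    (\<Sum>v\<in>{p, q, r}. f (Inl v)) + (\<Sum>e\<in>{{p, q}, {q, r}, {p, r}}. f (Inr e))"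
  using assms edges_within_triple[of p q r] unfolding triangle_def
  by (simp add: sum_clique_elements)

lemma C3_supermagicI:
  assumes G: "simple_graph V E"
    and cover: "H_covering (cycle_V 3) (cycle_E 3) V E"
    and inj: "inj_on lam (Inl ` V \<union> Inr ` E)"
    and lam_V: "\<And>v. v \<in> V \<Longrightarrow> lam (Inl v) \<in> {1..card V}"
    and lam_E: "\<And>e. e \<in> E \<Longrightarrow> lam (Inr e) \<in> {card V<..card V + card E}"
    and weight: "\<And>p q r. triangle E p q r \<Longrightarrow> sum lam (clique_elements {p, q, r}) = c"
  shows "H_supermagic (cycle_V 3) (cycle_E 3) V E"
proof -
  have bij_V: "bij_betw lam (Inl ` V) {1..card V}"
    using inj lam_V by (intro inj_on_card_imp_bij_betw) (auto simp: card_image inj_on_subset)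
  have bij_E: "bij_betw lam (Inr ` E) {card V<..card V + card E}"
    using inj lam_E by (intro inj_on_card_imp_bij_betw) (auto simp: card_image inj_on_subset)
  have "{1..card V} \<inter> {card V<..card V + card E} = {}"
    "{1..card V} \<union> {card V<..card V + card E} = {1..card V + card E}"
    by auto
  then have bij: "bij_betw lam (Inl ` V \<union> Inr ` E) {1..card V + card E}"
    using bij_betw_combine[OF bij_V bij_E] by simp
  have "(\<Sum>v\<in>V'. lam (Inl v)) + (\<Sum>e\<in>E'. lam (Inr e)) = c"
    if copy: "H_copy (cycle_V 3) (cycle_E 3) V E V' E'" for V' E'
  proof -
    obtain p q r where tri: "triangle E p q r" "V' = {p, q, r}" "E' = {{p, q}, {q, r}, {p, r}}"
      using H_copy_C3_imp_triangle[OF G copy] .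
    then show ?thesis
      using weight[OF tri(1)] sum_clique_elements_triangle[OF tri(1), of lam] by simp
  qed
  then show ?thesis
    unfolding H_supermagic_def H_supermagic_labeling_def H_magic_labeling_def
    using cover bij bij_betw_imp_surj_on[OF bij_V] by blast
qed

section \<open>Disjoint copies\<close>

lemma copies_E_iff: "e \<in> copies_E m E \<longleftrightarrow> (\<exists>j<m. \<exists>e0\<in>E. e = Pair j ` e0)"
  unfolding copies_E_def by blast

lemma simple_graph_copies:
  assumes "simple_graph V E"
  shows "simple_graph (copies_V m V) (copies_E m E)"
  unfolding simple_graph_def
proof (intro conjI ballI)
  show "finite (copies_V m V)"
    using assms unfolding simple_graph_def copies_V_def by simp
  fix e assume "e \<in> copies_E m E"
  then obtain j e0 where "j < m" "e0 \<in> E" "e = Pair j ` e0"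
    unfolding copies_E_iff by blast
  moreover obtain u v where "e0 = {u, v}" "u \<noteq> v" "u \<in> V" "v \<in> V"
    using assms \<open>e0 \<in> E\<close> unfolding simple_graph_def by blast
  ultimately show "\<exists>u v. e = {u, v} \<and> u \<noteq> v \<and> u \<in> copies_V m V \<and> v \<in> copies_V m V"
    unfolding copies_V_def by auto
qed

lemma card_copies_V: "card (copies_V m V) = m * card V"
  unfolding copies_V_def by (simp add: card_cartesian_product)

lemma card_copies_E:
  assumes "simple_graph V E"
  shows "card (copies_E m E) = m * card E"
proof -
  have "copies_E m E = (\<lambda>(j, e). Pair j ` e) ` ({0..<m} \<times> E)"
    unfolding copies_E_def by (auto simp: image_iff) blast
  moreover have "inj_on (\<lambda>(j, e). Pair j ` e) ({0..<m} \<times> E)"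
  proof (rule inj_onI, clarsimp)
    fix j j' e e' assume "e \<in> E" "Pair j ` e = Pair j' ` e'"
    moreover obtain u where "u \<in> e"
      using assms \<open>e \<in> E\<close> unfolding simple_graph_def by blast
    ultimately have "j = j'"
      by blast
    moreover have "inj (Pair j)"
      by (simp add: inj_on_def)
    ultimately show "j = j' \<and> e = e'"
      using \<open>Pair j ` e = Pair j' ` e'\<close> inj_image_eq_iff by metis
  qed
  ultimately show ?thesis
    by (simp add: card_image card_cartesian_product)
qed

lemma triangle_copiesE:
  assumes "triangle (copies_E m E) p q r"
  obtains j a b c where "j < m" "p = (j, a)" "q = (j, b)" "r = (j, c)" "triangle E a b c"
proof -
  have edge: "fst x = fst y \<and> fst x < m \<and> {snd x, snd y} \<in> E"
    if xy: "{x, y} \<in> copies_E m E" for x y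
  proof -
    obtain j e0 where "j < m" "e0 \<in> E" and e0: "{x, y} = Pair j ` e0"
      using xy unfolding copies_E_iff by blast
    have "snd ` {x, y} = e0"
      unfolding e0 by (simp add: image_image)
    then have "{snd x, snd y} \<in> E"
      using \<open>e0 \<in> E\<close> by simp
    moreover have "x \<in> Pair j ` e0" "y \<in> Pair j ` e0"
      using e0 by blast+
    then have "fst x = j" "fst y = j"
      by auto
    ultimately show ?thesis
      using \<open>j < m\<close> by simp
  qed
  define j a b c where "j = fst p" and "a = snd p" and "b = snd q" and "c = snd r"
  have "fst q = j" "fst r = j" "j < m" "{a, b} \<in> E" "{b, c} \<in> E" "{a, c} \<in> E"
    using assms edge unfolding triangle_def j_def a_def b_def c_def by metis+
  then have "p = (j, a)" "q = (j, b)" "r = (j, c)"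
    unfolding j_def a_def b_def c_def by (simp_all add: prod_eq_iff)
  moreover have "triangle E a b c"
    using assms \<open>{a, b} \<in> E\<close> \<open>{b, c} \<in> E\<close> \<open>{a, c} \<in> E\<close> calculation
    unfolding triangle_def by auto
  ultimately show thesis
    using that \<open>j < m\<close> by blast
qed

lemma H_copy_copies:
  assumes copy: "H_copy VH EH V E V' E'" and j: "j < m"
  shows "H_copy VH EH (copies_V m V) (copies_E m E) (Pair j ` V') (image (Pair j) ` E')"
proof -
  obtain f where f: "bij_betw f VH V'"
    and iso: "\<forall>u\<in>VH. \<forall>v\<in>VH. {u, v} \<in> EH \<longleftrightarrow> {f u, f v} \<in> E'"
    using copy unfolding H_copy_def isomorphic_def by blast
  have sub: "V' \<subseteq> V" "E' \<subseteq> E" "\<forall>e\<in>E'. e \<subseteq> V'"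
    using copy unfolding H_copy_def subgraph_def by auto
  have inj_image: "inj (image (Pair j))"
    by (simp add: inj_on_def inj_image_eq_iff)
  have "Pair j ` V' \<subseteq> copies_V m V"
    using sub j unfolding copies_V_def by auto
  moreover have "image (Pair j) ` E' \<subseteq> copies_E m E"
    using sub(2) j unfolding copies_E_def by blast
  moreover have "\<forall>e\<in>image (Pair j) ` E'. e \<subseteq> Pair j ` V'"
  proof
    fix e assume "e \<in> image (Pair j) ` E'"
    then obtain e' where "e = Pair j ` e'" "e' \<in> E'"
      by (rule imageE)
    then show "e \<subseteq> Pair j ` V'"
      using sub(3) image_mono by metis
  qed
  ultimately have "subgraph (Pair j ` V') (image (Pair j) ` E') (copies_V m V) (copies_E m E)"
    unfolding subgraph_def by blast
  moreover have "bij_betw (Pair j \<circ> f) VH (Pair j ` V')"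
    using f by (rule bij_betw_trans) (simp add: bij_betw_def inj_on_def)
  moreover have "{(Pair j \<circ> f) u, (Pair j \<circ> f) v} \<in> image (Pair j) ` E' \<longleftrightarrow> {f u, f v} \<in> E'" for u v
    using inj_image_mem_iff[OF inj_image, of "{f u, f v}"] by simp
  ultimately show ?thesis
    using iso unfolding H_copy_def isomorphic_def by blast
qed

lemma H_covering_copies:
  assumes "H_covering VH EH V E"
  shows "H_covering VH EH (copies_V m V) (copies_E m E)"
  unfolding H_covering_def
proof
  fix e assume "e \<in> copies_E m E"
  then obtain j e0 where "j < m" "e0 \<in> E" "e = Pair j ` e0"
    unfolding copies_E_iff by blast
  moreover obtain V' E' where "H_copy VH EH V E V' E'" "e0 \<in> E'"
    using assms \<open>e0 \<in> E\<close> unfolding H_covering_def by blast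
  ultimately show "\<exists>V' E'. H_copy VH EH (copies_V m V) (copies_E m E) V' E' \<and> e \<in> E'"
    using H_copy_copies by blast
qed

text \<open>The copy index of an edge \<open>Pair j ` e\<close> is read off from an arbitrary endpoint.\<close>

definition copies_labeling :: "(nat \<Rightarrow> 'a + 'a set \<Rightarrow> nat) \<Rightarrow> (nat \<times> 'a) + (nat \<times> 'a) set \<Rightarrow> nat" where
  "copies_labeling f x = (case x of
      Inl (j, v) \<Rightarrow> f j (Inl v)
    | Inr e \<Rightarrow> f (fst (SOME p. p \<in> e)) (Inr (snd ` e)))"

lemma copies_labeling_Inl [simp]: "copies_labeling f (Inl (j, v)) = f j (Inl v)"
  by (simp add: copies_labeling_def)

lemma copies_labeling_Inr:
  assumes "e \<noteq> {}"
  shows "copies_labeling f (Inr (Pair j ` e)) = f j (Inr e)"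
proof -
  have "(SOME p. p \<in> Pair j ` e) \<in> Pair j ` e"
    using assms by (simp add: some_in_eq)
  then have "fst (SOME p. p \<in> Pair j ` e) = j"
    by auto
  then show ?thesis
    by (simp add: copies_labeling_def image_image)
qed

lemma copies_elements:
  "Inl ` copies_V m V \<union> Inr ` copies_E m E =
    (\<lambda>(j, x). map_sum (Pair j) (image (Pair j)) x) ` ({0..<m} \<times> (Inl ` V \<union> Inr ` E))"
  (is "?L = ?lift ` ?D")
proof (intro equalityI subsetI)
  fix x assume "x \<in> ?L"
  then consider j v where "j < m" "v \<in> V" "x = Inl (j, v)"
    | j e where "j < m" "e \<in> E" "x = Inr (Pair j ` e)"
    unfolding copies_V_def copies_E_def by auto
  then show "x \<in> ?lift ` ?D"
    by cases (force intro: rev_image_eqI)+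
next
  fix x assume "x \<in> ?lift ` ?D"
  then show "x \<in> ?L"
    unfolding copies_V_def copies_E_def by (auto simp: image_iff)
qed

lemma copies_C3_supermagicI:
  fixes f :: "nat \<Rightarrow> 'a + 'a set \<Rightarrow> nat"
  assumes G: "simple_graph V E"
    and cover: "H_covering (cycle_V 3) (cycle_E 3) V E"
    and inj: "inj_on (\<lambda>(j, x). f j x) ({0..<m} \<times> (Inl ` V \<union> Inr ` E))"
    and f_V: "\<And>j v. j < m \<Longrightarrow> v \<in> V \<Longrightarrow> f j (Inl v) \<in> {1..m * card V}"
    and f_E: "\<And>j e. j < m \<Longrightarrow> e \<in> E \<Longrightarrow> f j (Inr e) \<in> {m * card V<..m * card V + m * card E}"
    and weight: "\<And>j p q r. j < m \<Longrightarrow> triangle E p q r \<Longrightarrow> sum (f j) (clique_elements {p, q, r}) = c"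
  shows "H_supermagic (cycle_V 3) (cycle_E 3) (copies_V m V) (copies_E m E)"
proof (rule C3_supermagicI[where lam = "copies_labeling f" and c = c])
  let ?lift = "\<lambda>(j, x). map_sum (Pair j) (image (Pair j)) x"
  let ?D = "{0..<m} \<times> (Inl ` V \<union> Inr ` E)"
  have ne: "e \<noteq> {}" if "e \<in> E" for e
    using G that unfolding simple_graph_def by blast
  have lift: "copies_labeling f (?lift y) = (\<lambda>(j, x). f j x) y" if "y \<in> ?D" for y
    using that ne by (auto simp: copies_labeling_Inr)
  show "simple_graph (copies_V m V) (copies_E m E)"
    using G by (rule simple_graph_copies)
  show "H_covering (cycle_V 3) (cycle_E 3) (copies_V m V) (copies_E m E)"
    using cover by (rule H_covering_copies)
  have "inj_on (copies_labeling f \<circ> ?lift) ?D \<longleftrightarrow> inj_on (\<lambda>(j, x). f j x) ?D"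
    by (rule inj_on_cong) (simp add: lift)
  then have "inj_on (copies_labeling f \<circ> ?lift) ?D"
    using inj by blast
  then show "inj_on (copies_labeling f) (Inl ` copies_V m V \<union> Inr ` copies_E m E)"
    unfolding copies_elements by (rule inj_on_imageI)
  show "copies_labeling f (Inl v) \<in> {1..card (copies_V m V)}" if "v \<in> copies_V m V" for v
    using f_V that by (auto simp: copies_V_def card_copies_V[unfolded copies_V_def])
  show "copies_labeling f (Inr e) \<in> {card (copies_V m V)<..card (copies_V m V) + card (copies_E m E)}"
    if "e \<in> copies_E m E" for e
    using f_E ne that by (auto simp: copies_E_iff card_copies_V card_copies_E[OF G] copies_labeling_Inr)
  fix p q r assume "triangle (copies_E m E) p q r"
  then obtain j a b c' where "j < m" "p = (j, a)" "q = (j, b)" "r = (j, c')" and tri: "triangle E a b c'"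
    by (rule triangle_copiesE)
  moreover have "copies_labeling f (Inr {(j, x), (j, y)}) = f j (Inr {x, y})" for x y
    using copies_labeling_Inr[of "{x, y}" f j] by simp
  ultimately show "sum (copies_labeling f) (clique_elements {p, q, r}) = c"
    using weight[OF \<open>j < m\<close> tri] tri unfolding triangle_def
    by (simp add: sum_clique_elements_triple)
qed

lemma mult_add_eq_mult_add_iff:
  fixes a b c d m :: nat
  assumes "b < m" "d < m"
  shows "m * a + b = m * c + d \<longleftrightarrow> a = c \<and> b = d"
proof
  assume eq: "m * a + b = m * c + d"
  have "(m * a + b) div m = a" "(m * c + d) div m = c"
    using assms by simp_all
  then have "a = c"
    using eq by simp
  then show "a = c \<and> b = d"
    using eq by simp
qed simp

lemma mult_add_Suc_bounds:
  fixes m p q l u :: nat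
  assumes "l \<le> q" "q < u" "p < m"
  shows "m * l < m * q + p + 1" "m * q + p + 1 \<le> m * u"
proof -
  have "m * l \<le> m * q"
    using assms(1) by (rule mult_le_mono2)
  moreover have "m * q + m \<le> m * u"
    using mult_le_mono2[of "q + 1" u m] assms(2) by simp
  ultimately show "m * l < m * q + p + 1" "m * q + p + 1 \<le> m * u"
    using assms(3) by linarith+
qed

text \<open>Labels of the copies written in base \<open>m\<close>: high digit \<open>Q\<close>, low digit \<open>P\<close>.\<close>

lemma copies_C3_supermagic_digits:
  fixes Q P :: "nat \<Rightarrow> 'a + 'a set \<Rightarrow> nat"
  assumes G: "simple_graph V E"
    and cover: "H_covering (cycle_V 3) (cycle_E 3) V E"
    and inj: "inj_on (\<lambda>(j, x). (Q j x, P j x)) ({0..<m} \<times> (Inl ` V \<union> Inr ` E))"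
    and P_lt: "\<And>j x. j < m \<Longrightarrow> x \<in> Inl ` V \<union> Inr ` E \<Longrightarrow> P j x < m"
    and Q_V: "\<And>j v. j < m \<Longrightarrow> v \<in> V \<Longrightarrow> Q j (Inl v) < card V"
    and Q_E: "\<And>j e. j < m \<Longrightarrow> e \<in> E \<Longrightarrow> Q j (Inr e) \<in> {card V..<card V + card E}"
    and Q_weight: "\<And>j p q r. j < m \<Longrightarrow> triangle E p q r \<Longrightarrow> sum (Q j) (clique_elements {p, q, r}) = A"
    and P_weight: "\<And>j p q r. j < m \<Longrightarrow> triangle E p q r \<Longrightarrow> sum (P j) (clique_elements {p, q, r}) = B"
  shows "H_supermagic (cycle_V 3) (cycle_E 3) (copies_V m V) (copies_E m E)"
proof (rule copies_C3_supermagicI[OF G cover, where f = "\<lambda>j x. m * Q j x + P j x + 1" and c = "m * A + B + 6"])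
  let ?D = "{0..<m} \<times> (Inl ` V \<union> Inr ` E)"
  show "inj_on (\<lambda>(j, x). m * Q j x + P j x + 1) ?D"
  proof (rule inj_onI)
    fix y y' assume y: "y \<in> ?D" "y' \<in> ?D"
      and eq: "(\<lambda>(j, x). m * Q j x + P j x + 1) y = (\<lambda>(j, x). m * Q j x + P j x + 1) y'"
    obtain j x j' x' where jx: "y = (j, x)" "y' = (j', x')"
      by fastforce
    then have "Q j x = Q j' x' \<and> P j x = P j' x'"
      using eq y P_lt by (simp add: mult_add_eq_mult_add_iff)
    then show "y = y'"
      using inj_onD[OF inj _ y] jx by simp
  qed
  fix j assume j: "j < m"
  show "m * Q j (Inl v) + P j (Inl v) + 1 \<in> {1..m * card V}" if "v \<in> V" for v
    using mult_add_Suc_bounds[of 0 "Q j (Inl v)" "card V" "P j (Inl v)" m] Q_V[OF j that] P_lt[OF j] that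
    by simp
  show "m * Q j (Inr e) + P j (Inr e) + 1 \<in> {m * card V<..m * card V + m * card E}" if "e \<in> E" for e
    using mult_add_Suc_bounds[of "card V" "Q j (Inr e)" "card V + card E" "P j (Inr e)" m]
      Q_E[OF j that] P_lt[OF j] that
    by (simp add: distrib_left)
  show "sum (\<lambda>x. m * Q j x + P j x + 1) (clique_elements {p, q, r}) = m * A + B + 6"
    if "triangle E p q r" for p q r
  proof -
    have "sum (\<lambda>x. m * Q j x + P j x + 1) (clique_elements {p, q, r}) =
        m * sum (Q j) (clique_elements {p, q, r}) + sum (P j) (clique_elements {p, q, r}) + 6"
      using that unfolding triangle_def by (simp add: sum_clique_elements_triple algebra_simps)
    then show ?thesis
      using Q_weight[OF j that] P_weight[OF j that] by simp
  qed
qed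

lemma C3_supermagicE:
  assumes G: "simple_graph V E" and magic: "H_supermagic (cycle_V 3) (cycle_E 3) V E"
  obtains lam c where "H_covering (cycle_V 3) (cycle_E 3) V E"
    and "inj_on lam (Inl ` V \<union> Inr ` E)"
    and "\<And>v. v \<in> V \<Longrightarrow> lam (Inl v) \<in> {1..card V}"
    and "\<And>e. e \<in> E \<Longrightarrow> lam (Inr e) \<in> {card V<..card V + card E}"
    and "\<And>p q r. triangle E p q r \<Longrightarrow> sum lam (clique_elements {p, q, r}) = c"
proof -
  obtain lam c where cover: "H_covering (cycle_V 3) (cycle_E 3) V E"
    and bij: "bij_betw lam (Inl ` V \<union> Inr ` E) {1..card V + card E}"
    and lam_V: "lam ` Inl ` V = {1..card V}"
    and const: "\<And>V' E'. H_copy (cycle_V 3) (cycle_E 3) V E V' E' \<Longrightarrow>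
      (\<Sum>v\<in>V'. lam (Inl v)) + (\<Sum>e\<in>E'. lam (Inr e)) = c"
    using magic unfolding H_supermagic_def H_supermagic_labeling_def H_magic_labeling_def by blast
  have "lam (Inr e) \<in> {card V<..card V + card E}" if "e \<in> E" for e
  proof -
    have "lam (Inr e) \<notin> lam ` Inl ` V"
      using bij_betw_imp_inj_on[OF bij] that by (auto simp: inj_on_eq_iff)
    then show ?thesis
      using bij_betwE[OF bij] that unfolding lam_V by fastforce
  qed
  moreover have "sum lam (clique_elements {p, q, r}) = c" if "triangle E p q r" for p q r
    using const[OF triangle_imp_H_copy_C3[OF G that]] sum_clique_elements_triangle[OF that, of lam]
    by simp
  ultimately show thesis
    using that cover bij_betw_imp_inj_on[OF bij] lam_V by blast
qed

lemma C3_supermagic_copies: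
  assumes G: "simple_graph V E" and magic: "H_supermagic (cycle_V 3) (cycle_E 3) V E"
  shows "H_supermagic (cycle_V 3) (cycle_E 3) (copies_V m V) (copies_E m E)"
proof -
  let ?X = "Inl ` V \<union> Inr ` E"
  obtain lam c where cover: "H_covering (cycle_V 3) (cycle_E 3) V E" and inj: "inj_on lam ?X"
    and lam_V: "\<And>v. v \<in> V \<Longrightarrow> lam (Inl v) \<in> {1..card V}"
    and lam_E: "\<And>e. e \<in> E \<Longrightarrow> lam (Inr e) \<in> {card V<..card V + card E}"
    and weight: "\<And>p q r. triangle E p q r \<Longrightarrow> sum lam (clique_elements {p, q, r}) = c"
    using C3_supermagicE[OF G magic] by blast
  have lam_pos: "1 \<le> lam x" if "x \<in> ?X" for x
    using that lam_V lam_E by fastforce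
  define P where "P j x = (case x of Inl _ \<Rightarrow> j | Inr _ \<Rightarrow> m - 1 - j)" for j and x :: "'a + 'a set"
  show ?thesis
  proof (rule copies_C3_supermagic_digits[OF G cover, where Q = "\<lambda>_ x. lam x - 1" and P = P
        and A = "c - 6" and B = "3 * (m - 1)"])
    show "inj_on (\<lambda>(j, x). (lam x - 1, P j x)) ({0..<m} \<times> ?X)"
    proof (rule inj_onI, clarify)
      fix j x j' x' assume j: "j \<in> {0..<m}" "j' \<in> {0..<m}" and x: "x \<in> ?X" "x' \<in> ?X"
        and eq: "lam x - 1 = lam x' - 1" "P j x = P j' x'"
      have "x = x'"
        using eq(1) lam_pos[OF x(1)] lam_pos[OF x(2)] inj_onD[OF inj _ x] by simp
      moreover from this have "j = j'"
        using eq(2) j by (cases x) (auto simp: P_def)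
      ultimately show "j = j' \<and> x = x'"
        by simp
    qed
    fix j assume j: "j < m"
    show "P j x < m" for x
      using j by (simp add: P_def split: sum.splits)
    show "lam (Inl v) - 1 < card V" if "v \<in> V" for v
      using lam_V[OF that] by auto
    show "lam (Inr e) - 1 \<in> {card V..<card V + card E}" if "e \<in> E" for e
      using lam_E[OF that] by auto
    fix p q r assume tri: "triangle E p q r"
    then have distinct: "p \<noteq> q" "q \<noteq> r" "p \<noteq> r"
      unfolding triangle_def by blast+
    have "clique_elements {p, q, r} \<subseteq> ?X"
      using tri simple_graph_edge_subset[OF G] unfolding triangle_def by (auto simp: clique_elements_triple)
    then show "sum (\<lambda>x. lam x - 1) (clique_elements {p, q, r}) = c - 6"
      using weight[OF tri] card_clique_elements_triple[OF distinct] lam_pos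
      by (subst sum_subtractf_nat) auto
    show "sum (P j) (clique_elements {p, q, r}) = 3 * (m - 1)"
      using distinct j by (simp add: sum_clique_elements_triple P_def)
  qed
qed

section \<open>Wheels\<close>

lemma wheel_E_eq:
  "wheel_E n = (\<lambda>i. {None, Some i}) ` {..<n} \<union> (\<lambda>i. {Some i, Some ((i + 1) mod n)}) ` {..<n}"
  unfolding wheel_E_def by auto

lemma card_wheel_V: "card (wheel_V n) = n + 1"
  unfolding wheel_V_def by (simp add: card_image)

lemma mod_succ_succ_neq: "3 \<le> n \<Longrightarrow> i < n \<Longrightarrow> ((i + 1) mod n + 1) mod n \<noteq> i"
  for i n :: nat
  by (cases "i + 1 = n"; cases "i + 2 = n") (simp_all add: mod_Suc)

lemma rim_edge_eq_iff:
  fixes n :: nat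
  assumes "3 \<le> n" "i < n" "k < n"
  shows "{Some i, Some ((i + 1) mod n)} = {Some k, Some ((k + 1) mod n)} \<longleftrightarrow> i = k"
  using assms mod_succ_succ_neq[of n i] mod_succ_succ_neq[of n k] by (auto simp: doubleton_eq_iff)

lemma card_wheel_E:
  assumes "3 \<le> n"
  shows "card (wheel_E n) = 2 * n"
proof -
  have "inj_on (\<lambda>i. {None, Some i}) {..<n}"
    by (auto simp: inj_on_def doubleton_eq_iff)
  moreover have "inj_on (\<lambda>i. {Some i, Some ((i + 1) mod n)}) {..<n}"
    using rim_edge_eq_iff[OF assms] by (auto simp: inj_on_def)
  moreover have "(\<lambda>i. {None, Some i}) ` {..<n} \<inter> (\<lambda>i. {Some i, Some ((i + 1) mod n)}) ` {..<n} = {}"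
    by auto
  ultimately show ?thesis
    unfolding wheel_E_eq by (simp add: card_Un_disjoint card_image)
qed

lemma hub_triangle:
  assumes "3 \<le> n" "i < n"
  shows "triangle (wheel_E n) None (Some i) (Some ((i + 1) mod n))"
proof -
  have "i \<noteq> (i + 1) mod n" "(i + 1) mod n < n"
    using assms by (auto simp: mod_Suc)
  then show ?thesis
    using assms unfolding triangle_def wheel_E_eq by blast
qed

lemma simple_graph_wheel:
  assumes "3 \<le> n"
  shows "simple_graph (wheel_V n) (wheel_E n)"
  unfolding simple_graph_def
proof (intro conjI ballI)
  show "finite (wheel_V n)"
    by (simp add: wheel_V_def)
  fix e assume "e \<in> wheel_E n"
  then obtain i where i: "i < n" and e: "e = {None, Some i} \<or> e = {Some i, Some ((i + 1) mod n)}"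
    unfolding wheel_E_def by blast
  have "i \<noteq> (i + 1) mod n" "(i + 1) mod n < n"
    using assms i by (auto simp: mod_Suc)
  then show "\<exists>u v. e = {u, v} \<and> u \<noteq> v \<and> u \<in> wheel_V n \<and> v \<in> wheel_V n"
    using e
  proof (elim disjE)
    assume "e = {None, Some i}"
    then show ?thesis
      using i unfolding wheel_V_def by (intro exI[of _ None] exI[of _ "Some i"]) simp
  next
    assume "e = {Some i, Some ((i + 1) mod n)}"
    then show ?thesis
      using i \<open>i \<noteq> (i + 1) mod n\<close> \<open>(i + 1) mod n < n\<close> unfolding wheel_V_def
      by (intro exI[of _ "Some i"] exI[of _ "Some ((i + 1) mod n)"]) simp
  qed
qed

lemma H_covering_wheel:
  assumes "3 \<le> n"
  shows "H_covering (cycle_V 3) (cycle_E 3) (wheel_V n) (wheel_E n)"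
  unfolding H_covering_def
proof
  fix e assume "e \<in> wheel_E n"
  then obtain i where "i < n" and "e = {None, Some i} \<or> e = {Some i, Some ((i + 1) mod n)}"
    unfolding wheel_E_def by blast
  with triangle_imp_H_copy_C3[OF simple_graph_wheel[OF assms] hub_triangle[OF assms]]
  show "\<exists>V' E'. H_copy (cycle_V 3) (cycle_E 3) (wheel_V n) (wheel_E n) V' E' \<and> e \<in> E'"
    by blast
qed

lemma wheel_rim_edge:
  assumes "{Some x, Some y} \<in> wheel_E n"
  shows "x < n \<and> y < n \<and> (y = (x + 1) mod n \<or> x = (y + 1) mod n)"
proof -
  obtain i where "i < n" "{Some x, Some y} = {Some i, Some ((i + 1) mod n)}"
    using assms unfolding wheel_E_def by blast
  then show ?thesis
    by (auto simp: doubleton_eq_iff)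
qed

lemma wheel_no_rim_triangle:
  assumes "4 \<le> n" "triangle (wheel_E n) (Some x) (Some y) (Some z)"
  shows False
proof -
  have adj: "y = x + 1 \<or> x = y + 1 \<or> (x + 1 = n \<and> y = 0) \<or> (y + 1 = n \<and> x = 0)"
    if "{Some x, Some y} \<in> wheel_E n" for x y
    using wheel_rim_edge[OF that] by (auto simp: mod_Suc split: if_splits)
  have "x \<noteq> y" "y \<noteq> z" "x \<noteq> z"
    using assms(2) unfolding triangle_def by auto
  moreover have "{Some x, Some y} \<in> wheel_E n" "{Some y, Some z} \<in> wheel_E n" "{Some x, Some z} \<in> wheel_E n"
    using assms(2) unfolding triangle_def by auto
  note this[THEN adj]
  ultimately show False
    using assms(1) by (elim disjE conjE) linarith+
qed

lemma wheel_hub_triangle_cases: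
  assumes "triangle (wheel_E n) None b c"
  shows "\<exists>i<n. {None, b, c} = {None, Some i, Some ((i + 1) mod n)}"
proof -
  obtain x y where xy: "b = Some x" "c = Some y"
    using assms unfolding triangle_def by (cases b; cases c) auto
  then have "x < n \<and> y < n \<and> (y = (x + 1) mod n \<or> x = (y + 1) mod n)"
    using assms unfolding triangle_def by (intro wheel_rim_edge) blast
  then show ?thesis
    unfolding xy by (auto simp: insert_commute)
qed

lemma wheel_triangle_cases:
  assumes "3 \<le> n" and tri: "triangle (wheel_E n) a b c"
  shows "(\<exists>i<n. {a, b, c} = {None, Some i, Some ((i + 1) mod n)}) \<or>
    (n = 3 \<and> {a, b, c} = {Some 0, Some 1, Some 2})"
proof -
  consider "a = None" | "b = None" | "c = None" | x y z where "a = Some x" "b = Some y" "c = Some z"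
    by (cases a; cases b; cases c) auto
  then show ?thesis
  proof cases
    case 1
    then show ?thesis
      using wheel_hub_triangle_cases[of n b c] tri by simp
  next
    case 2
    then show ?thesis
      using wheel_hub_triangle_cases[OF triangle_swap(1)[OF tri, unfolded 2]]
      by (simp add: insert_commute)
  next
    case 3
    then show ?thesis
      using wheel_hub_triangle_cases[OF triangle_swap(1)[OF triangle_swap(2)[OF tri], unfolded 3]]
      by (simp add: insert_commute)
  next
    case 4
    then have "n = 3"
      using assms wheel_no_rim_triangle[of n] by fastforce
    moreover have "x < 3" "y < 3" "z < 3" "x \<noteq> y" "y \<noteq> z" "x \<noteq> z"
      using tri wheel_rim_edge[of _ _ n] \<open>n = 3\<close> unfolding triangle_def 4 by auto
    then have "{x, y, z} = {0, 1, 2}"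
      by (intro card_subset_eq) auto
    then have "{a, b, c} = {Some 0, Some 1, Some 2}"
      unfolding 4 using image_insert[of Some] by (metis image_empty)
    with \<open>n = 3\<close> show ?thesis
      by (intro disjI2 conjI)
  qed
qed

text \<open>For odd \<open>n\<close>, \<open>spoke_rank n\<close> permutes \<open>{..<n}\<close> so that \<open>i + spoke_rank n i + spoke_rank n (i + 1)\<close>
  is constant (\<open>spoke_rank_hub\<close>); this is what makes all hub triangles equally heavy.\<close>

definition spoke_rank :: "nat \<Rightarrow> nat \<Rightarrow> nat" where
  "spoke_rank n i = (if even i then n div 2 - i div 2 else n - 1 - i div 2)"

definition wheel_label :: "nat \<Rightarrow> nat option + nat option set \<Rightarrow> nat" where
  "wheel_label n x = (case x of
      Inl None \<Rightarrow> n
    | Inl (Some i) \<Rightarrow> i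
    | Inr e \<Rightarrow>
        if None \<in> e then n + 1 + spoke_rank n (THE i. e = {None, Some i})
        else 3 * n - ((THE i. i < n \<and> e = {Some i, Some ((i + 1) mod n)}) + 1) mod n)"

lemma spoke_rank_lt:
  assumes "odd n" "i < n"
  shows "spoke_rank n i < n"
  using assms unfolding spoke_rank_def by (auto elim!: oddE)

lemma spoke_rank_inj:
  assumes "odd n"
  shows "inj_on (spoke_rank n) {..<n}"
proof (rule inj_onI)
  fix i k assume "i \<in> {..<n}" "k \<in> {..<n}" "spoke_rank n i = spoke_rank n k"
  then show "i = k"
    using assms unfolding spoke_rank_def by (auto split: if_splits elim!: oddE evenE)
qed

lemma spoke_rank_hub:
  assumes "odd n" "i < n"
  shows "i + spoke_rank n i + spoke_rank n ((i + 1) mod n) = 3 * (n div 2)"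
proof -
  obtain q where n: "n = 2 * q + 1"
    using assms(1) by (rule oddE)
  show ?thesis
  proof (cases "i + 1 = n")
    case True
    then show ?thesis
      using n by (simp add: spoke_rank_def)
  next
    case False
    then have "(i + 1) mod n = i + 1"
      using assms(2) by simp
    then show ?thesis
      using n assms(2) False by (cases "even i") (auto simp: spoke_rank_def elim!: evenE oddE)
  qed
qed

lemma wheel_label_Inl [simp]:
  "wheel_label n (Inl None) = n" "wheel_label n (Inl (Some i)) = i"
  by (simp_all add: wheel_label_def)

lemma wheel_label_spoke: "wheel_label n (Inr {None, Some i}) = n + 1 + spoke_rank n i"
proof -
  have "(THE k. {None, Some i} = {None, Some k}) = i"
    by (rule the_equality) (auto simp: doubleton_eq_iff)
  then show ?thesis
    by (simp add: wheel_label_def)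
qed

lemma wheel_label_rim:
  assumes "3 \<le> n" "i < n"
  shows "wheel_label n (Inr {Some i, Some ((i + 1) mod n)}) = 3 * n - (i + 1) mod n"
proof -
  have "(THE k. k < n \<and> {Some i, Some ((i + 1) mod n)} = {Some k, Some ((k + 1) mod n)}) = i"
    by (rule the_equality) (use assms rim_edge_eq_iff[of n i] in blast)+
  then show ?thesis
    by (simp add: wheel_label_def)
qed

lemma wheel_label_Inl_le:
  assumes "v \<in> wheel_V n"
  shows "wheel_label n (Inl v) \<le> n"
  using assms unfolding wheel_V_def wheel_label_def by auto

lemma wheel_label_spoke_range:
  assumes "odd n" "i < n"
  shows "n < wheel_label n (Inr {None, Some i}) \<and> wheel_label n (Inr {None, Some i}) \<le> 2 * n"
  using spoke_rank_lt[OF assms] by (simp add: wheel_label_spoke)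

lemma wheel_label_rim_range:
  assumes "3 \<le> n" "i < n"
  shows "2 * n < wheel_label n (Inr {Some i, Some ((i + 1) mod n)}) \<and>
    wheel_label n (Inr {Some i, Some ((i + 1) mod n)}) \<le> 3 * n"
proof -
  have "(i + 1) mod n < n"
    using assms by simp
  then show ?thesis
    using wheel_label_rim[OF assms] by simp
qed

lemma wheel_label_Inr_range:
  assumes "odd n" "3 \<le> n" "e \<in> wheel_E n"
  shows "n < wheel_label n (Inr e) \<and> wheel_label n (Inr e) \<le> 3 * n"
proof -
  obtain i where i: "i < n" and "e = {None, Some i} \<or> e = {Some i, Some ((i + 1) mod n)}"
    using assms(3) unfolding wheel_E_def by blast
  then show ?thesis
    using wheel_label_spoke_range[OF assms(1) i] wheel_label_rim_range[OF assms(2) i] by auto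
qed

lemma wheel_label_rim_inj:
  assumes "3 \<le> n" "i < n" "k < n"
    and "wheel_label n (Inr {Some i, Some ((i + 1) mod n)}) = wheel_label n (Inr {Some k, Some ((k + 1) mod n)})"
  shows "i = k"
proof -
  have "(i + 1) mod n < n" "(k + 1) mod n < n"
    using assms by simp_all
  moreover have "3 * n - (i + 1) mod n = 3 * n - (k + 1) mod n"
    using assms(4) wheel_label_rim[OF assms(1,2)] wheel_label_rim[OF assms(1,3)] by simp
  ultimately have "(i + 1) mod n = (k + 1) mod n"
    by arith
  then show "i = k"
    using assms(2,3) by (auto simp: mod_Suc split: if_splits)
qed

lemma wheel_label_inj:
  assumes "odd n" "3 \<le> n"
  shows "inj_on (wheel_label n) (Inl ` wheel_V n \<union> Inr ` wheel_E n)"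
proof -
  let ?spokes = "Inr ` (\<lambda>i. {None, Some i}) ` {..<n}"
  let ?rims = "Inr ` (\<lambda>i. {Some i, Some ((i + 1) mod n)}) ` {..<n}"
  have inj_Un: "inj_on (wheel_label n) (A \<union> B)"
    if "inj_on (wheel_label n) A" "inj_on (wheel_label n) B" "wheel_label n ` A \<inter> wheel_label n ` B = {}"
    for A B
    using that unfolding inj_on_Un by blast
  have inj_V: "inj_on (wheel_label n) (Inl ` wheel_V n)"
    unfolding wheel_V_def by (auto simp: inj_on_def wheel_label_def)
  have inj_spokes: "inj_on (wheel_label n) ?spokes"
    using spoke_rank_inj[OF assms(1)] by (auto simp: inj_on_def wheel_label_spoke)
  have inj_rims: "inj_on (wheel_label n) ?rims"
    using wheel_label_rim_inj[OF assms(2)] by (auto simp: inj_on_def)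
  have V: "wheel_label n ` Inl ` wheel_V n \<subseteq> {..n}"
    using wheel_label_Inl_le by auto
  have S: "wheel_label n ` ?spokes \<subseteq> {n<..2 * n}"
    using wheel_label_spoke_range[OF assms(1)] by auto
  have R: "wheel_label n ` ?rims \<subseteq> {2 * n<..3 * n}"
    using wheel_label_rim_range[OF assms(2)] by auto
  have disjoint: "A \<inter> B = {}" if "A \<subseteq> C" "B \<subseteq> D" "C \<inter> D = {}" for A B C D :: "nat set"
    using that by blast
  have "wheel_label n ` ?spokes \<inter> wheel_label n ` ?rims = {}"
    by (rule disjoint[OF S R]) auto
  moreover have "wheel_label n ` Inl ` wheel_V n \<inter> wheel_label n ` (?spokes \<union> ?rims) = {}"
    unfolding image_Un by (rule disjoint[OF V Un_mono[OF S R]]) auto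
  ultimately have "inj_on (wheel_label n) (Inl ` wheel_V n \<union> (?spokes \<union> ?rims))"
    by (intro inj_Un inj_V inj_spokes inj_rims)
  then show ?thesis
    unfolding wheel_E_eq image_Un by simp
qed

lemma wheel_label_hub_weight:
  assumes "odd n" "3 \<le> n" "i < n"
  shows "sum (wheel_label n) (clique_elements {None, Some i, Some ((i + 1) mod n)}) =
    6 * n + 2 + 3 * (n div 2)"
proof -
  define k where "k = (i + 1) mod n"
  have "k < n"
    using assms unfolding k_def by simp
  have "triangle (wheel_E n) None (Some i) (Some k)"
    unfolding k_def using assms(2,3) by (rule hub_triangle)
  then have "sum (wheel_label n) (clique_elements {None, Some i, Some k}) =
      n + i + k + (n + 1 + spoke_rank n i) + wheel_label n (Inr {Some i, Some k}) + (n + 1 + spoke_rank n k)"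
    unfolding triangle_def by (simp add: sum_clique_elements_triple wheel_label_spoke)
  also have "wheel_label n (Inr {Some i, Some k}) = 3 * n - k"
    unfolding k_def using assms(2,3) by (rule wheel_label_rim)
  finally show ?thesis
    using spoke_rank_hub[OF assms(1,3)] \<open>k < n\<close> unfolding k_def by simp
qed

theorem wheel_C3_supermagic:
  assumes "odd n" "5 \<le> n"
  shows "H_supermagic (cycle_V 3) (cycle_E 3) (wheel_V n) (wheel_E n)"
proof (rule C3_supermagicI[where lam = "\<lambda>x. wheel_label n x + 1" and c = "6 * n + 8 + 3 * (n div 2)"])
  have n: "3 \<le> n"
    using assms by simp
  show "simple_graph (wheel_V n) (wheel_E n)"
    using n by (rule simple_graph_wheel)
  show "H_covering (cycle_V 3) (cycle_E 3) (wheel_V n) (wheel_E n)"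
    using n by (rule H_covering_wheel)
  show "inj_on (\<lambda>x. wheel_label n x + 1) (Inl ` wheel_V n \<union> Inr ` wheel_E n)"
  proof -
    have "inj_on (Suc \<circ> wheel_label n) (Inl ` wheel_V n \<union> Inr ` wheel_E n)"
      using wheel_label_inj[OF assms(1) n] by (rule comp_inj_on) simp
    then show ?thesis
      by (simp add: comp_def)
  qed
  show "wheel_label n (Inl v) + 1 \<in> {1..card (wheel_V n)}" if "v \<in> wheel_V n" for v
    using wheel_label_Inl_le[OF that] by (simp add: card_wheel_V)
  show "wheel_label n (Inr e) + 1 \<in> {card (wheel_V n)<..card (wheel_V n) + card (wheel_E n)}"
    if "e \<in> wheel_E n" for e
    using wheel_label_Inr_range[OF assms(1) n that] by (simp add: card_wheel_V card_wheel_E[OF n])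
  fix a b c assume tri: "triangle (wheel_E n) a b c"
  have "\<exists>i<n. {a, b, c} = {None, Some i, Some ((i + 1) mod n)}"
    using wheel_triangle_cases[OF n tri] assms(2) by (elim disjE) simp_all
  then obtain i where "i < n" and abc: "{a, b, c} = {None, Some i, Some ((i + 1) mod n)}"
    by blast
  moreover have "card (clique_elements {a, b, c}) = 6"
    using tri unfolding triangle_def by (simp add: card_clique_elements_triple)
  ultimately show "sum (\<lambda>x. wheel_label n x + 1) (clique_elements {a, b, c}) = 6 * n + 8 + 3 * (n div 2)"
    using wheel_label_hub_weight[OF assms(1) n] by (simp add: sum_Suc)
qed

section \<open>Copies of \<open>W\<^sub>3 = K\<^sub>4\<close>\<close>

text \<open>\<open>wheel_label 3\<close> maps the ten elements of \<open>W\<^sub>3\<close> bijectively onto \<open>{0..9}\<close>, the vertices onto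
  \<open>{0..3}\<close>; these are the label sets of the four triangles.\<close>

definition W3_triangle_labels :: "nat set set" where
  "W3_triangle_labels = {{0, 1, 3, 5, 6, 8}, {1, 2, 3, 4, 6, 7}, {0, 2, 3, 4, 5, 9}, {0, 1, 2, 7, 8, 9}}"

lemma wheel_label_hub_image:
  assumes "3 \<le> n" "i < n"
  shows "wheel_label n ` clique_elements {None, Some i, Some ((i + 1) mod n)} =
    {n, i, (i + 1) mod n, n + 1 + spoke_rank n i, 3 * n - (i + 1) mod n, n + 1 + spoke_rank n ((i + 1) mod n)}"
proof -
  have "triangle (wheel_E n) None (Some i) (Some ((i + 1) mod n))"
    using assms by (rule hub_triangle)
  then show ?thesis
    using wheel_label_rim[OF assms] unfolding triangle_def
    by (simp add: clique_elements_triple wheel_label_spoke)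
qed

lemma wheel3_triangle_labels:
  assumes "triangle (wheel_E 3) a b c"
  shows "wheel_label 3 ` clique_elements {a, b, c} \<in> W3_triangle_labels"
proof -
  \<comment> \<open>unfolded before simplification, which would turn \<open>i + 1\<close> into \<open>Suc i\<close>\<close>
  have succ: "(0 + 1) mod 3 = (1 :: nat)" "(1 + 1) mod 3 = (2 :: nat)" "(2 + 1) mod 3 = (0 :: nat)"
    by simp_all
  have hub: "wheel_label 3 ` clique_elements {None, Some i, Some ((i + 1) mod 3)} \<in> W3_triangle_labels"
    if "i < 3" for i
  proof -
    have "i = 0 \<or> i = 1 \<or> i = 2"
      using that by arith
    then consider "i = 0" | "i = 1" | "i = 2"
      by blast
    then show ?thesis
    proof cases
      case 1
      show ?thesis
        using wheel_label_hub_image[of 3 0] unfolding 1 succ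
        by (simp add: W3_triangle_labels_def spoke_rank_def insert_commute)
    next
      case 2
      show ?thesis
        using wheel_label_hub_image[of 3 1] unfolding 2 succ
        by (simp add: W3_triangle_labels_def spoke_rank_def insert_commute)
    next
      case 3
      show ?thesis
        using wheel_label_hub_image[of 3 2] unfolding 3 succ
        by (simp add: W3_triangle_labels_def spoke_rank_def insert_commute)
    qed
  qed
  have "{Some 0, Some (2 :: nat)} = {Some 2, Some 0}"
    by auto
  then have rim: "wheel_label 3 ` clique_elements {Some 0, Some 1, Some 2} \<in> W3_triangle_labels"
    using wheel_label_rim[of 3 0, unfolded succ] wheel_label_rim[of 3 1, unfolded succ]
      wheel_label_rim[of 3 2, unfolded succ]
    by (simp add: clique_elements_triple W3_triangle_labels_def insert_commute)
  show ?thesis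
    using wheel_triangle_cases[OF order.refl assms]
  proof (elim disjE exE conjE)
    fix i assume "i < 3" "{a, b, c} = {None, Some i, Some ((i + 1) mod 3)}"
    then show ?thesis
      using hub by simp
  next
    assume "{a, b, c} = {Some 0, Some 1, Some 2}"
    then show ?thesis
      using rim by simp
  qed
qed

text \<open>Labelings of \<open>2K\<^sub>4\<close> by \<open>{0..<20}\<close> and of \<open>3K\<^sub>4\<close> by \<open>{0..<30}\<close>, indexed by the copy and by
  \<open>wheel_label 3\<close>, with the smallest values on vertices; on every triangle the base-2 (resp. base-3)
  digits of the six labels add up to 24 and 3 (resp. 24 and 6).\<close>

definition K4_pair_table :: "nat \<Rightarrow> nat \<Rightarrow> nat" where
  "K4_pair_table s k = [[3, 5, 6, 0, 9, 16, 19, 12, 8, 17], [2, 4, 7, 1, 10, 18, 15, 14, 11, 13]] ! s ! k"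

definition K4_triple_table :: "nat \<Rightarrow> nat \<Rightarrow> nat" where
  "K4_triple_table t k = [[1, 5, 10, 0, 22, 19, 29, 12, 24, 26], [3, 6, 11, 2, 15, 27, 23, 21, 17, 20],
    [7, 8, 9, 4, 14, 28, 18, 25, 13, 16]] ! t ! k"

lemma lessThan_10: "{..<10 :: nat} = {0, 1, 2, 3, 4, 5, 6, 7, 8, 9}"
  by auto

lemma K4_pair_table_inj: "inj_on (\<lambda>(s, k). K4_pair_table s k) ({..<2} \<times> {..<10})"
proof -
  have "{..<2 :: nat} = {0, 1}"
    by auto
  then show ?thesis
    by (simp add: lessThan_10 inj_on_def K4_pair_table_def)
qed

lemma K4_triple_table_inj: "inj_on (\<lambda>(t, k). K4_triple_table t k) ({..<3} \<times> {..<10})"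
proof -
  have "{..<3 :: nat} = {0, 1, 2}"
    by auto
  then show ?thesis
    by (simp add: lessThan_10 inj_on_def K4_triple_table_def)
qed

lemma K4_pair_table_range:
  assumes "s < 2" "k < 10"
  shows "(k < 4 \<longleftrightarrow> K4_pair_table s k < 8) \<and> K4_pair_table s k < 20"
proof -
  have "s \<in> {0, 1}" "k \<in> {..<10}"
    using assms by auto
  then show ?thesis
    unfolding lessThan_10 by (auto simp: K4_pair_table_def)
qed

lemma K4_triple_table_range:
  assumes "t < 3" "k < 10"
  shows "(k < 4 \<longleftrightarrow> K4_triple_table t k < 12) \<and> K4_triple_table t k < 30"
proof -
  have "t \<in> {0, 1, 2}" "k \<in> {..<10}"
    using assms by auto
  then show ?thesis
    unfolding lessThan_10 by (auto simp: K4_triple_table_def)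
qed

lemma K4_pair_table_sums:
  assumes "s < 2" "S \<in> W3_triangle_labels"
  shows "(\<Sum>k\<in>S. K4_pair_table s k div 2) = 24 \<and> (\<Sum>k\<in>S. K4_pair_table s k mod 2) = 3"
proof -
  have "s \<in> {0, 1}"
    using assms by auto
  then show ?thesis
    using assms(2) unfolding W3_triangle_labels_def by (auto simp: K4_pair_table_def)
qed

lemma K4_triple_table_sums:
  assumes "t < 3" "S \<in> W3_triangle_labels"
  shows "(\<Sum>k\<in>S. K4_triple_table t k div 3) = 24 \<and> (\<Sum>k\<in>S. K4_triple_table t k mod 3) = 6"
proof -
  have "t \<in> {0, 1, 2}"
    using assms by auto
  then show ?thesis
    using assms(2) unfolding W3_triangle_labels_def by (auto simp: K4_triple_table_def)
qed

lemma W3_triangle_labels_split: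
  fixes a b :: nat
  assumes "S \<in> W3_triangle_labels"
  shows "(\<Sum>k\<in>S. if k < 4 then a else b) = 3 * a + 3 * b"
  using assms by (auto simp: W3_triangle_labels_def)

lemma W3_triangle_labels_card: "S \<in> W3_triangle_labels \<Longrightarrow> card S = 6"
  by (auto simp: W3_triangle_labels_def)

text \<open>For \<open>m = 2z\<close> or \<open>m = 2z + 3\<close>: copy \<open>j < 2z\<close> is copy \<open>j div z\<close> of the \<open>(j mod z)\<close>-th pair,
  the remaining copies form the triple. The pair index enters the low digit as \<open>j mod z\<close> on
  vertices and as \<open>z - 1 - j mod z\<close> on edges, so it cancels in every triangle.\<close>

definition K4_class :: "nat \<Rightarrow> nat \<Rightarrow> nat \<Rightarrow> nat" where
  "K4_class z j k =
    (if j < 2 * z then K4_pair_table (j div z) k div 2 else K4_triple_table (j - 2 * z) k div 3)"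

definition K4_offset :: "nat \<Rightarrow> nat \<Rightarrow> nat \<Rightarrow> nat \<Rightarrow> nat" where
  "K4_offset m z j k =
    (if j < 2 * z
     then (m - z) * (K4_pair_table (j div z) k mod 2) + (if k < 4 then j mod z else z - 1 - j mod z)
     else z + K4_triple_table (j - 2 * z) k mod 3)"

lemma K4_pair_index:
  fixes j z :: nat
  assumes "j < 2 * z"
  shows "0 < z \<and> j div z < 2 \<and> j mod z < z"
  using assms by (auto simp: div_less_iff_less_mult mult.commute)

lemma K4_triple_index:
  fixes m z j :: nat
  assumes "m = 2 * z \<or> m = 2 * z + 3" "j < m" "\<not> j < 2 * z"
  shows "m = 2 * z + 3 \<and> j - 2 * z < 3"
  using assms by auto

lemma K4_offset_lt:
  assumes m: "m = 2 * z \<or> m = 2 * z + 3" and "j < m"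
  shows "K4_offset m z j k < m"
proof (cases "j < 2 * z")
  case True
  define h where "h = (m - z) * (K4_pair_table (j div z) k mod 2)"
  define r where "r = (if k < 4 then j mod z else z - 1 - j mod z)"
  have "h \<le> m - z"
    unfolding h_def by (simp add: mod2_eq_if)
  moreover have "r < z"
    using K4_pair_index[OF True] unfolding r_def by auto
  moreover have "K4_offset m z j k = h + r"
    using True unfolding K4_offset_def h_def r_def by simp
  ultimately show ?thesis
    using m by arith
next
  case False
  then show ?thesis
    using K4_triple_index[OF assms False] unfolding K4_offset_def by auto
qed

lemma K4_class_range:
  assumes m: "m = 2 * z \<or> m = 2 * z + 3" and "j < m" "k < 10"
  shows "(k < 4 \<longleftrightarrow> K4_class z j k < 4) \<and> K4_class z j k < 10"
proof (cases "j < 2 * z")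
  case True
  then show ?thesis
    using K4_pair_index[OF True] K4_pair_table_range[of "j div z" k] \<open>k < 10\<close>
    unfolding K4_class_def by auto
next
  case False
  then show ?thesis
    using K4_triple_index[OF m \<open>j < m\<close> False] K4_triple_table_range[of "j - 2 * z" k] \<open>k < 10\<close>
    unfolding K4_class_def by auto
qed

lemma K4_offset_cases:
  assumes m: "m = 2 * z \<or> m = 2 * z + 3" and "j < m"
  shows "j < 2 * z \<longleftrightarrow> K4_offset m z j k < z \<or> m - z \<le> K4_offset m z j k"
proof (cases "j < 2 * z")
  case True
  have "(if k < 4 then j mod z else z - 1 - j mod z) < z"
    using K4_pair_index[OF True] by auto
  then show ?thesis
    using True unfolding K4_offset_def by (auto simp: mod2_eq_if)
next
  case False
  then show ?thesis
    using K4_triple_index[OF assms False] unfolding K4_offset_def by auto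
qed

lemma K4_inj_pair:
  assumes j: "j < 2 * z" "j' < 2 * z" and k: "k < 10" "k' < 10"
    and same_class: "K4_class z j k = K4_class z j' k'" and same_offset: "K4_offset m z j k = K4_offset m z j' k'"
    and "2 * z \<le> m"
  shows "j = j' \<and> k = k'"
proof -
  define L L' where "L = K4_pair_table (j div z) k" and "L' = K4_pair_table (j' div z) k'"
  define r r' where "r = (if k < 4 then j mod z else z - 1 - j mod z)"
    and "r' = (if k' < 4 then j' mod z else z - 1 - j' mod z)"
  have jz: "j mod z < z" "j' mod z < z"
    using K4_pair_index[OF j(1)] K4_pair_index[OF j(2)] by blast+
  then have "r < z" "r' < z"
    unfolding r_def r'_def by auto
  then have "r < m - z" "r' < m - z"
    using \<open>2 * z \<le> m\<close> by arith+
  moreover have "(m - z) * (L mod 2) + r = (m - z) * (L' mod 2) + r'"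
    using same_offset j unfolding K4_offset_def L_def L'_def r_def r'_def by simp
  ultimately have "L mod 2 = L' mod 2" "r = r'"
    using mult_add_eq_mult_add_iff by blast+
  moreover have "L div 2 = L' div 2"
    using same_class j unfolding K4_class_def L_def L'_def by simp
  ultimately have "L = L'"
    by (metis div_mult_mod_eq)
  then have "j div z = j' div z" "k = k'"
    using inj_onD[OF K4_pair_table_inj, of "(j div z, k)" "(j' div z, k')"] K4_pair_index[OF j(1)]
      K4_pair_index[OF j(2)] k unfolding L_def L'_def by auto
  moreover have "j mod z = j' mod z"
  proof (cases "k < 4")
    case True
    then show ?thesis
      using \<open>r = r'\<close> \<open>k = k'\<close> unfolding r_def r'_def by simp
  next
    case False
    then have "z - 1 - j mod z = z - 1 - j' mod z"
      using \<open>r = r'\<close> \<open>k = k'\<close> unfolding r_def r'_def by simp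
    with jz show ?thesis
      by arith
  qed
  ultimately show ?thesis
    by (metis div_mult_mod_eq)
qed

lemma K4_inj:
  assumes m: "m = 2 * z \<or> m = 2 * z + 3" and j: "j < m" "j' < m" and k: "k < 10" "k' < 10"
    and same_class: "K4_class z j k = K4_class z j' k'" and same_offset: "K4_offset m z j k = K4_offset m z j' k'"
  shows "j = j' \<and> k = k'"
proof -
  have "j < 2 * z \<longleftrightarrow> j' < 2 * z"
    using K4_offset_cases[OF m j(1), of k] K4_offset_cases[OF m j(2), of k'] same_offset by simp
  moreover have "j = j' \<and> k = k'" if "\<not> j < 2 * z" "\<not> j' < 2 * z"
  proof -
    define L L' where "L = K4_triple_table (j - 2 * z) k" and "L' = K4_triple_table (j' - 2 * z) k'"
    have "L div 3 = L' div 3" "L mod 3 = L' mod 3"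
      using same_class same_offset that unfolding K4_class_def K4_offset_def L_def L'_def by simp_all
    then have "L = L'"
      by (metis div_mult_mod_eq)
    then have "j - 2 * z = j' - 2 * z" "k = k'"
      using inj_onD[OF K4_triple_table_inj, of "(j - 2 * z, k)" "(j' - 2 * z, k')"]
        K4_triple_index[OF m j(1) that(1)] K4_triple_index[OF m j(2) that(2)] k
      unfolding L_def L'_def by auto
    then show ?thesis
      using that by simp
  qed
  ultimately show ?thesis
    using K4_inj_pair[OF _ _ k same_class same_offset] m by auto
qed

lemma K4_sums:
  assumes m: "m = 2 * z \<or> m = 2 * z + 3" and "j < m" and S: "S \<in> W3_triangle_labels"
  shows "(\<Sum>k\<in>S. K4_class z j k) = 24 \<and> (\<Sum>k\<in>S. K4_offset m z j k) = 3 * (m - 1)"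
proof (cases "j < 2 * z")
  case True
  define s i where "s = j div z" and "i = j mod z"
  have "s < 2" "i < z"
    using K4_pair_index[OF True] unfolding s_def i_def by blast+
  have "(\<Sum>k\<in>S. K4_class z j k) = (\<Sum>k\<in>S. K4_pair_table s k div 2)"
    using True unfolding K4_class_def s_def by simp
  moreover have "(\<Sum>k\<in>S. K4_offset m z j k) =
      (m - z) * (\<Sum>k\<in>S. K4_pair_table s k mod 2) + (\<Sum>k\<in>S. if k < 4 then i else z - 1 - i)"
    using True unfolding K4_offset_def s_def i_def by (simp add: sum.distrib sum_distrib_left)
  ultimately show ?thesis
    using K4_pair_table_sums[OF \<open>s < 2\<close> S] W3_triangle_labels_split[OF S] \<open>i < z\<close> True m
    by auto
next
  case False
  define t where "t = j - 2 * z"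
  have "t < 3" "m = 2 * z + 3"
    using K4_triple_index[OF m \<open>j < m\<close> False] unfolding t_def by blast+
  have "(\<Sum>k\<in>S. K4_class z j k) = (\<Sum>k\<in>S. K4_triple_table t k div 3)"
    using False unfolding K4_class_def t_def by simp
  moreover have "(\<Sum>k\<in>S. K4_offset m z j k) = card S * z + (\<Sum>k\<in>S. K4_triple_table t k mod 3)"
    using False unfolding K4_offset_def t_def by (simp add: sum.distrib)
  ultimately show ?thesis
    using K4_triple_table_sums[OF \<open>t < 3\<close> S] W3_triangle_labels_card[OF S] \<open>m = 2 * z + 3\<close>
    by simp
qed

lemma ex_double_or_double_plus_three:
  fixes m :: nat
  assumes "2 \<le> m"
  shows "\<exists>z. m = 2 * z \<or> m = 2 * z + 3"
proof (cases "even m")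
  case True
  then show ?thesis
    by (auto elim!: evenE)
next
  case False
  then obtain y where "m = 2 * y + 1"
    by (rule oddE)
  with assms have "m = 2 * (y - 1) + 3"
    by simp
  then show ?thesis
    by blast
qed

lemma sum_wheel_label_reindex:
  assumes "odd n" "3 \<le> n" "triangle (wheel_E n) p q r"
  shows "sum (\<lambda>x. g (wheel_label n x)) (clique_elements {p, q, r}) =
    sum g (wheel_label n ` clique_elements {p, q, r})"
proof -
  have "clique_elements {p, q, r} \<subseteq> Inl ` wheel_V n \<union> Inr ` wheel_E n"
    using assms(3) simple_graph_edge_subset[OF simple_graph_wheel[OF assms(2)]]
    unfolding triangle_def by (auto simp: clique_elements_triple)
  then show ?thesis
    using inj_on_subset[OF wheel_label_inj[OF assms(1,2)]] by (simp add: sum.reindex)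
qed

theorem copies_wheel3_C3_supermagic:
  assumes "2 \<le> m"
  shows "H_supermagic (cycle_V 3) (cycle_E 3) (copies_V m (wheel_V 3)) (copies_E m (wheel_E 3))"
proof -
  obtain z where m: "m = 2 * z \<or> m = 2 * z + 3"
    using ex_double_or_double_plus_three[OF assms] by blast
  let ?X = "Inl ` wheel_V 3 \<union> Inr ` wheel_E 3"
  have odd3: "odd (3 :: nat)" and three: "3 \<le> (3 :: nat)"
    by simp_all
  have label_V: "wheel_label 3 (Inl v) < 4" if "v \<in> wheel_V 3" for v
    using wheel_label_Inl_le[OF that] by simp
  have label_E: "4 \<le> wheel_label 3 (Inr e) \<and> wheel_label 3 (Inr e) < 10" if "e \<in> wheel_E 3" for e
    using wheel_label_Inr_range[OF odd3 three that] by simp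
  have label_lt: "wheel_label 3 x < 10" if "x \<in> ?X" for x
    using that label_V label_E by fastforce
  show ?thesis
  proof (rule copies_C3_supermagic_digits[OF simple_graph_wheel[OF three] H_covering_wheel[OF three],
        where Q = "\<lambda>j x. K4_class z j (wheel_label 3 x)" and P = "\<lambda>j x. K4_offset m z j (wheel_label 3 x)"
        and A = 24 and B = "3 * (m - 1)"])
    show "inj_on (\<lambda>(j, x). (K4_class z j (wheel_label 3 x), K4_offset m z j (wheel_label 3 x))) ({0..<m} \<times> ?X)"
    proof (rule inj_onI, clarify)
      fix j x j' x' assume j: "j \<in> {0..<m}" "j' \<in> {0..<m}" and x: "x \<in> ?X" "x' \<in> ?X"
        and "K4_class z j (wheel_label 3 x) = K4_class z j' (wheel_label 3 x')"
        "K4_offset m z j (wheel_label 3 x) = K4_offset m z j' (wheel_label 3 x')"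
      then have "j = j' \<and> wheel_label 3 x = wheel_label 3 x'"
        using K4_inj[OF m _ _ label_lt[OF x(1)] label_lt[OF x(2)]] by simp
      then show "j = j' \<and> x = x'"
        using inj_onD[OF wheel_label_inj[OF odd3 three] _ x] by blast
    qed
    fix j assume j: "j < m"
    show "K4_offset m z j (wheel_label 3 x) < m" for x
      using K4_offset_lt[OF m j] .
    show "K4_class z j (wheel_label 3 (Inl v)) < card (wheel_V 3)" if "v \<in> wheel_V 3" for v
      using K4_class_range[OF m j, of "wheel_label 3 (Inl v)"] label_V[OF that] by (simp add: card_wheel_V)
    show "K4_class z j (wheel_label 3 (Inr e)) \<in> {card (wheel_V 3)..<card (wheel_V 3) + card (wheel_E 3)}"
      if "e \<in> wheel_E 3" for e
      using K4_class_range[OF m j, of "wheel_label 3 (Inr e)"] label_E[OF that]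
      by (simp add: card_wheel_V card_wheel_E)
    fix p q r assume tri: "triangle (wheel_E 3) p q r"
    show "sum (\<lambda>x. K4_class z j (wheel_label 3 x)) (clique_elements {p, q, r}) = 24"
      "sum (\<lambda>x. K4_offset m z j (wheel_label 3 x)) (clique_elements {p, q, r}) = 3 * (m - 1)"
      using K4_sums[OF m j wheel3_triangle_labels[OF tri]]
        sum_wheel_label_reindex[OF odd3 three tri, of "K4_class z j"]
        sum_wheel_label_reindex[OF odd3 three tri, of "K4_offset m z j"]
      by simp_all
  qed
qed

theorem theorem5:
  fixes n m :: nat
  assumes "odd n" and "n \<ge> 3" and "m \<ge> 2"
  shows "H_supermagic (cycle_V 3) (cycle_E 3)
           (copies_V m (wheel_V n)) (copies_E m (wheel_E n))"
proof (cases "n = 3")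
  case True
  then show ?thesis
    using copies_wheel3_C3_supermagic[OF assms(3)] by simp
next
  case False
  then have "5 \<le> n"
    using assms(1,2) by presburger
  then show ?thesis
    using C3_supermagic_copies[OF simple_graph_wheel wheel_C3_supermagic[OF assms(1)]] assms(2) by simp
qed

end
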